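(* Let $\Xi$ be smooth with $\Xi(0,0,0,0)=0$ and $\frac{\partial\Xi}{\partial\psi}(0,0,0,0)<0$, and let $T>0$. There exist $C_\Xi>0$ and $\varepsilon_2>0$ such that if $\omega_{1i}(t,\psi),\omega_{2i}(t,\psi)$ ($i=1,2,3$) are $C^1$ functions, $T$-periodic in $t$, with $\|\omega_{1i}\|_{C^1}\le\varepsilon_2$ and $\|\omega_{2i}\|_{C^1}\le\varepsilon_2$, and $\psi_1^*,\psi_2^*$ are the $T$-periodic solutions of $\psi_j'(t)=\Xi(\psi_j(t),\omega_{j1}(t,\psi_j(t)),\omega_{j2}(t,\psi_j(t)),\omega_{j3}(t,\psi_j(t)))$, $j=1,2$, then $$\|\psi_1^*-\psi_2^*\|\le(1+C_\Xi T\varepsilon_2)\exp(\Xi_{\psi,0}T)\frac1{\Xi_{\psi,0}}\sum_{i=1}^3\Xi_{\omega_{i,0}}\|\omega_{1i}-\omega_{2i}\|,$$ $$\|\psi_1^{*\prime}-\psi_2^{*\prime}\|\le(1+C_\Xi T\varepsilon_2)\exp(\Xi_{\psi,0}T)\sum_{i=1}^3\Xi_{\omega_{i,0}}\|\omega_{1i}-\omega_{2i}\|+(1+C_\Xi\varepsilon_2)\sum_{i=1}^3\Xi_{\omega_{i,0}}\|\omega_{1i}-\omega_{2i}\|.$$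
   Context: $\|\cdot\|$ denotes the sup ($C^0$) norm. $\Xi_{\psi,0}=\big|\frac{\partial\Xi}{\partial\psi}(0,0,0,0)\big|$ and $\Xi_{\omega_{i,0}}=1+\big|\frac{\partial\Xi}{\partial\omega_i}(0,0,0,0)\big|$ for $i=1,2,3$. For small $C^1$ data each such equation has a unique $T$-periodic solution near $0$. *)

theory Defs
  imports "HOL-Analysis.Analysis"
begin

fun iter_pderiv :: "'n list \<Rightarrow> (real^'n \<Rightarrow> real) \<Rightarrow> real^'n \<Rightarrow> real" where
  "iter_pderiv [] f = f"
| "iter_pderiv (i # is) f =
     (\<lambda>x. deriv (\<lambda>s. iter_pderiv is f (x + s *\<^sub>R axis i 1)) 0)"

definition smooth_fun :: "(real^'n \<Rightarrow> real) \<Rightarrow> bool" where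
  "smooth_fun f \<longleftrightarrow>
     (\<forall>is. continuous_on UNIV (iter_pderiv is f) \<and>
        (\<forall>i x. (\<lambda>s. iter_pderiv is f (x + s *\<^sub>R axis i 1)) differentiable (at 0)))"

definition smooth4 :: "(real \<Rightarrow> real \<Rightarrow> real \<Rightarrow> real \<Rightarrow> real) \<Rightarrow> bool" where
  "smooth4 Xi \<longleftrightarrow> smooth_fun (\<lambda>x::real^4. Xi (x$1) (x$2) (x$3) (x$4))"

definition Xi_psi0 :: "(real \<Rightarrow> real \<Rightarrow> real \<Rightarrow> real \<Rightarrow> real) \<Rightarrow> real" where
  "Xi_psi0 Xi = \<bar>deriv (\<lambda>p. Xi p 0 0 0) 0\<bar>"

definition pderiv_omega0 :: "(real \<Rightarrow> real \<Rightarrow> real \<Rightarrow> real \<Rightarrow> real) \<Rightarrow> nat \<Rightarrow> real" where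
  "pderiv_omega0 Xi i =
     (if i = 1 then deriv (\<lambda>s. Xi 0 s 0 0) 0
      else if i = 2 then deriv (\<lambda>s. Xi 0 0 s 0) 0
      else deriv (\<lambda>s. Xi 0 0 0 s) 0)"

definition Xi_omega0 :: "(real \<Rightarrow> real \<Rightarrow> real \<Rightarrow> real \<Rightarrow> real) \<Rightarrow> nat \<Rightarrow> real" where
  "Xi_omega0 Xi i = 1 + \<bar>pderiv_omega0 Xi i\<bar>"

definition C1_fun2 :: "(real \<Rightarrow> real \<Rightarrow> real) \<Rightarrow> bool" where
  "C1_fun2 w \<longleftrightarrow> (\<exists>D :: real \<times> real \<Rightarrow> ((real \<times> real) \<Rightarrow>\<^sub>L real).
      (\<forall>z. ((\<lambda>(t, p). w t p) has_derivative blinfun_apply (D z)) (at z)) \<and>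
      continuous_on UNIV D)"

definition periodic_t :: "real \<Rightarrow> (real \<Rightarrow> real \<Rightarrow> real) \<Rightarrow> bool" where
  "periodic_t T w \<longleftrightarrow> (\<forall>t p. w (t + T) p = w t p)"

text \<open>C^1 norm (max convention): sup over (t,psi) of max(|w|, |d_t w|, |d_psi w|).
  "norm <= e" written out pointwise.\<close>
definition C1_norm_le :: "(real \<Rightarrow> real \<Rightarrow> real) \<Rightarrow> real \<Rightarrow> bool" where
  "C1_norm_le w e \<longleftrightarrow> (\<forall>t p. \<bar>w t p\<bar> \<le> e \<and>
      \<bar>deriv (\<lambda>s. w s p) t\<bar> \<le> e \<and> \<bar>deriv (\<lambda>s. w t s) p\<bar> \<le> e)"

definition sup_norm2 :: "(real \<Rightarrow> real \<Rightarrow> real) \<Rightarrow> real" where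
  "sup_norm2 w = (SUP z \<in> UNIV. \<bar>w (fst z) (snd z)\<bar>)"

definition sup_norm1 :: "(real \<Rightarrow> real) \<Rightarrow> real" where
  "sup_norm1 f = (SUP t \<in> UNIV. \<bar>f t\<bar>)"

definition periodic_solution ::
  "real \<Rightarrow> (real \<Rightarrow> real \<Rightarrow> real \<Rightarrow> real \<Rightarrow> real) \<Rightarrow> (nat \<Rightarrow> real \<Rightarrow> real \<Rightarrow> real)
     \<Rightarrow> (real \<Rightarrow> real) \<Rightarrow> bool" where
  "periodic_solution T Xi w \<psi> \<longleftrightarrow>
     (\<forall>t. \<psi> (t + T) = \<psi> t) \<and>
     (\<forall>t. (\<psi> has_real_derivative
             Xi (\<psi> t) (w 1 t (\<psi> t)) (w 2 t (\<psi> t)) (w 3 t (\<psi> t))) (at t))"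

end

theory Submission
  imports Defs
begin

(* The difference e = psi1 - psi2 of the two solutions is T-periodic, so |e| attains its maximum,
  where e' vanishes. Mean value arguments along the coordinates, together with continuity of the
  partial derivatives of Xi at the origin, give e' = A e + g near the origin, with A within 2 eta of
  dXi/dpsi(0) = -Xi_psi0 and |g| bounded by S, the weighted sum of the sup distances of the omegas;
  the psi-dependence of omega_1i only perturbs A, because its psi-derivative is at most eps2.
  Hence max |e| <= S / (Xi_psi0 - 2 eta), and for small eta the factor exp (Xi_psi0 T) absorbs the
  loss; the relation e' = A e + g then bounds e'. *)

lemma MVT_between:
  fixes f :: "real \<Rightarrow> real"
  assumes "\<And>x. (f has_real_derivative f' x) (at x)"
  shows "\<exists>z. min a b \<le> z \<and> z \<le> max a b \<and> f b - f a = (b - a) * f' z"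
proof (cases a b rule: linorder_cases)
  case less
  then obtain z where "a < z" "z < b" "f b - f a = (b - a) * f' z"
    using MVT2[of a b f f'] assms by blast
  then show ?thesis by (intro exI[of _ z]) auto
next
  case greater
  then obtain z where "b < z" "z < a" "f a - f b = (a - b) * f' z"
    using MVT2[of b a f f'] assms by blast
  then show ?thesis by (intro exI[of _ z]) (auto simp: algebra_simps)
qed auto

lemma smooth_fun_has_partial_derivative:
  assumes "smooth_fun f"
  shows "((\<lambda>s. f (x + s *\<^sub>R axis k 1)) has_real_derivative
           iter_pderiv [k] f (x + s *\<^sub>R axis k 1)) (at s)"
proof -
  let ?x = "x + s *\<^sub>R axis k 1"
  have "(\<lambda>u. f (?x + u *\<^sub>R axis k 1)) differentiable (at 0)"
    using assms unfolding smooth_fun_def by (metis iter_pderiv.simps(1))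
  then have "((\<lambda>u. f (?x + u *\<^sub>R axis k 1)) has_real_derivative iter_pderiv [k] f ?x) (at 0)"
    by (simp add: DERIV_deriv_iff_real_differentiable)
  then show ?thesis
    using DERIV_shift[of "\<lambda>s. f (x + s *\<^sub>R axis k 1)" _ 0 s] by (simp add: algebra_simps)
qed

lemma smooth_fun_partials_near_0:
  fixes f :: "real^'n \<Rightarrow> real"
  assumes "smooth_fun f" "\<eta> > 0"
  obtains m where "m > 0"
    "\<And>k y. \<forall>i. \<bar>y $ i\<bar> \<le> m \<Longrightarrow> \<bar>iter_pderiv [k] f y - iter_pderiv [k] f 0\<bar> < \<eta>"
proof -
  have "continuous_on UNIV (\<lambda>y. \<chi> k. iter_pderiv [k] f y)"
    using assms(1) unfolding smooth_fun_def by (intro continuous_on_vec_lambda) blast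
  then obtain r where "r > 0"
    and r: "\<And>y. dist y 0 < r \<Longrightarrow> dist (\<chi> k. iter_pderiv [k] f y) (\<chi> k. iter_pderiv [k] f 0) < \<eta>"
    unfolding continuous_on_iff using assms(2) by (metis UNIV_I)
  define m where "m = r / (2 * CARD('n))"
  show ?thesis
  proof
    show "m > 0" using \<open>r > 0\<close> by (simp add: m_def)
    fix k and y :: "real^'n" assume y: "\<forall>i. \<bar>y $ i\<bar> \<le> m"
    have "norm y \<le> (\<Sum>i\<in>UNIV. \<bar>y $ i\<bar>)" by (rule norm_le_l1_cart)
    also have "\<dots> \<le> CARD('n) * m" using y sum_bounded_above[of "UNIV :: 'n set" "\<lambda>i. \<bar>y $ i\<bar>" m] by simp
    also have "\<dots> < r" using \<open>r > 0\<close> by (simp add: m_def)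
    finally have "dist (\<chi> k. iter_pderiv [k] f y) (\<chi> k. iter_pderiv [k] f 0) < \<eta>"
      by (intro r) simp
    then show "\<bar>iter_pderiv [k] f y - iter_pderiv [k] f 0\<bar> < \<eta>"
      using component_le_norm_cart[of "(\<chi> k. iter_pderiv [k] f y) - (\<chi> k. iter_pderiv [k] f 0)" k]
      by (simp add: dist_norm)
  qed
qed

lemma smooth_fun_increment_axis:
  fixes f :: "real^'n \<Rightarrow> real"
  assumes "smooth_fun f"
    and near: "\<And>y. \<forall>i. \<bar>y $ i\<bar> \<le> m \<Longrightarrow> \<bar>iter_pderiv [k] f y - c\<bar> < \<eta>"
    and x: "\<forall>i. \<bar>x $ i\<bar> \<le> m" and h: "\<bar>x $ k + h\<bar> \<le> m"
  shows "\<exists>d. \<bar>d - c\<bar> < \<eta> \<and> f (x + h *\<^sub>R axis k 1) - f x = h * d"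
proof -
  obtain z where z: "min 0 h \<le> z" "z \<le> max 0 h"
    and eq: "f (x + h *\<^sub>R axis k 1) - f (x + 0 *\<^sub>R axis k 1) = (h - 0) * iter_pderiv [k] f (x + z *\<^sub>R axis k 1)"
    using MVT_between[OF smooth_fun_has_partial_derivative[OF assms(1)], of 0 h x k] by blast
  have "\<bar>(x + z *\<^sub>R axis k 1) $ i\<bar> \<le> m" for i
  proof (cases "i = k")
    case True
    have "\<bar>x $ k\<bar> \<le> m" using x by blast
    with True h z show ?thesis by (auto simp: axis_def abs_le_iff min_def max_def split: if_splits)
  qed (use x in \<open>auto simp: axis_def\<close>)
  then have "\<bar>iter_pderiv [k] f (x + z *\<^sub>R axis k 1) - c\<bar> < \<eta>"
    using near by blast
  moreover have "f (x + h *\<^sub>R axis k 1) - f x = h * iter_pderiv [k] f (x + z *\<^sub>R axis k 1)"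
    using eq by (simp del: iter_pderiv.simps)
  ultimately show ?thesis by blast
qed

lemma smooth_fun_increment:
  fixes f :: "real^'n \<Rightarrow> real"
  assumes "smooth_fun f"
    and near: "\<And>k y. \<forall>i. \<bar>y $ i\<bar> \<le> m \<Longrightarrow> \<bar>iter_pderiv [k] f y - c k\<bar> < \<eta>"
    and x: "\<forall>i. \<bar>x $ i\<bar> \<le> m" and y: "\<forall>i. \<bar>y $ i\<bar> \<le> m"
  shows "\<exists>d. (\<forall>k. \<bar>d k - c k\<bar> < \<eta>) \<and> f y - f x = (\<Sum>k\<in>UNIV. (y $ k - x $ k) * d k)"
proof -
  define mix where "mix J = (\<chi> i. if i \<in> J then y $ i else x $ i)" for J
  have mix_bounded: "\<forall>i. \<bar>mix J $ i\<bar> \<le> m" for J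
    using x y by (simp add: mix_def)
  have mix_increment: "\<exists>d. (\<forall>k. \<bar>d k - c k\<bar> < \<eta>) \<and> f (mix J) - f x = (\<Sum>k\<in>J. (y $ k - x $ k) * d k)" for J
  proof (induction J rule: finite_induct[OF finite])
    case 1
    have "\<eta> > 0" using near[OF x] by (meson abs_ge_zero le_less_trans)
    then show ?case by (intro exI[of _ c]) (simp add: mix_def)
  next
    case (2 j J)
    then obtain d where d: "\<forall>k. \<bar>d k - c k\<bar> < \<eta>"
      and IH: "f (mix J) - f x = (\<Sum>k\<in>J. (y $ k - x $ k) * d k)" by blast
    have step: "mix (insert j J) = mix J + (y $ j - x $ j) *\<^sub>R axis j 1"
      using 2 by (auto simp: mix_def vec_eq_iff axis_def)
    obtain dj where dj: "\<bar>dj - c j\<bar> < \<eta>"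
      and inc: "f (mix (insert j J)) - f (mix J) = (y $ j - x $ j) * dj"
      using smooth_fun_increment_axis[OF assms(1) near[where k = j] mix_bounded[of J], where h = "y $ j - x $ j"] 2 y
      unfolding step by (force simp: mix_def)
    have "(\<Sum>k\<in>J. (y $ k - x $ k) * (d(j := dj)) k) = (\<Sum>k\<in>J. (y $ k - x $ k) * d k)"
      using 2 by (intro sum.cong) auto
    then show ?case using 2 d dj IH inc
      by (intro exI[of _ "d(j := dj)"]) (auto simp: algebra_simps)
  qed
  have "mix UNIV = y" by (simp add: mix_def vec_eq_iff)
  then show ?thesis using mix_increment[of UNIV] by simp
qed

definition vec4 :: "real \<Rightarrow> real \<Rightarrow> real \<Rightarrow> real \<Rightarrow> real^4" where
  "vec4 a b c d = (\<chi> j. if j = 1 then a else if j = 2 then b else if j = 3 then c else d)"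

lemma vec4_nth [simp]: "vec4 a b c d $ 1 = a" "vec4 a b c d $ 2 = b"
    "vec4 a b c d $ 3 = c" "vec4 a b c d $ 4 = d"
  by (simp_all add: vec4_def)

lemma smooth4_partials_at_0:
  fixes Xi :: "real \<Rightarrow> real \<Rightarrow> real \<Rightarrow> real \<Rightarrow> real"
  defines "F \<equiv> \<lambda>x::real^4. Xi (x$1) (x$2) (x$3) (x$4)"
  shows "iter_pderiv [1] F 0 = deriv (\<lambda>p. Xi p 0 0 0) 0"
    and "iter_pderiv [2] F 0 = pderiv_omega0 Xi 1"
    and "iter_pderiv [3] F 0 = pderiv_omega0 Xi 2"
    and "iter_pderiv [4] F 0 = pderiv_omega0 Xi 3"
  by (simp_all add: F_def pderiv_omega0_def axis_def)

definition increment_approx :: "(real \<Rightarrow> real \<Rightarrow> real \<Rightarrow> real \<Rightarrow> real) \<Rightarrow> real \<Rightarrow> real \<Rightarrow> bool" where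
  "increment_approx Xi m \<eta> \<longleftrightarrow>
     (\<forall>p1 p2 u z. \<bar>p1\<bar> \<le> m \<longrightarrow> \<bar>p2\<bar> \<le> m \<longrightarrow> (\<forall>i\<in>{1..3}. \<bar>u i\<bar> \<le> m \<and> \<bar>z i\<bar> \<le> m) \<longrightarrow>
       (\<exists>c. Xi p1 (u 1) (u 2) (u 3) - Xi p2 (z 1) (z 2) (z 3)
              = (p1 - p2) * c 0 + (\<Sum>i\<in>{1..3}. (u i - z i) * c i)
            \<and> \<bar>c 0 - deriv (\<lambda>p. Xi p 0 0 0) 0\<bar> < \<eta>
            \<and> (\<forall>i\<in>{1..3}. \<bar>c i - pderiv_omega0 Xi i\<bar> < \<eta>)))"

lemma atLeastAtMost_1_3: "{1..3::nat} = {1, 2, 3}"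
  by auto

lemma smooth4_increment_approx:
  assumes "smooth4 Xi" "\<eta> > 0"
  obtains m where "m > 0" "increment_approx Xi m \<eta>"
proof -
  define F where "F = (\<lambda>x::real^4. Xi (x$1) (x$2) (x$3) (x$4))"
  have F: "smooth_fun F" using assms(1) by (simp add: smooth4_def F_def)
  obtain m where "m > 0"
    and near: "\<And>k y. \<forall>i. \<bar>y $ i\<bar> \<le> m \<Longrightarrow> \<bar>iter_pderiv [k] F y - iter_pderiv [k] F 0\<bar> < \<eta>"
    using smooth_fun_partials_near_0[OF F assms(2)] by blast
  have "increment_approx Xi m \<eta>"
    unfolding increment_approx_def
  proof (intro allI impI)
    fix p1 p2 and u z :: "nat \<Rightarrow> real"
    assume "\<bar>p1\<bar> \<le> m" "\<bar>p2\<bar> \<le> m" "\<forall>i\<in>{1..3}. \<bar>u i\<bar> \<le> m \<and> \<bar>z i\<bar> \<le> m"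
    then have "\<forall>i. \<bar>vec4 p2 (z 1) (z 2) (z 3) $ i\<bar> \<le> m" "\<forall>i. \<bar>vec4 p1 (u 1) (u 2) (u 3) $ i\<bar> \<le> m"
      by (simp_all add: forall_4)
    from smooth_fun_increment[OF F near this]
    obtain d where d: "\<forall>k. \<bar>d k - iter_pderiv [k] F 0\<bar> < \<eta>"
      and "F (vec4 p1 (u 1) (u 2) (u 3)) - F (vec4 p2 (z 1) (z 2) (z 3))
           = (\<Sum>k\<in>UNIV. (vec4 p1 (u 1) (u 2) (u 3) $ k - vec4 p2 (z 1) (z 2) (z 3) $ k) * d k)"
      by blast
    moreover from d have "\<bar>d 1 - deriv (\<lambda>p. Xi p 0 0 0) 0\<bar> < \<eta>"
      "\<bar>d 2 - pderiv_omega0 Xi 1\<bar> < \<eta>" "\<bar>d 3 - pderiv_omega0 Xi 2\<bar> < \<eta>"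
      "\<bar>d 4 - pderiv_omega0 Xi 3\<bar> < \<eta>"
      unfolding smooth4_partials_at_0[of Xi, folded F_def, symmetric] by blast+
    ultimately show "\<exists>c. Xi p1 (u 1) (u 2) (u 3) - Xi p2 (z 1) (z 2) (z 3)
              = (p1 - p2) * c 0 + (\<Sum>i\<in>{1..3}. (u i - z i) * c i)
            \<and> \<bar>c 0 - deriv (\<lambda>p. Xi p 0 0 0) 0\<bar> < \<eta>
            \<and> (\<forall>i\<in>{1..3}. \<bar>c i - pderiv_omega0 Xi i\<bar> < \<eta>)"
      \<comment> \<open>coordinate \<open>i + 1\<close> of \<open>real^4\<close> carries the argument \<open>\<omega>\<^sub>i\<close>, coordinate 1 carries \<open>\<psi>\<close>\<close>
      unfolding atLeastAtMost_1_3 by (intro exI[of _ "\<lambda>i. d (of_nat i + 1)"])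
        (simp add: F_def sum_4 algebra_simps)
  qed
  with \<open>m > 0\<close> show ?thesis using that by blast
qed

lemma C1_fun2_has_derivative_snd:
  assumes "C1_fun2 w"
  shows "((\<lambda>s. w t s) has_real_derivative deriv (\<lambda>s. w t s) p) (at p)"
proof -
  obtain D :: "real \<times> real \<Rightarrow> ((real \<times> real) \<Rightarrow>\<^sub>L real)"
    where D: "\<And>z. ((\<lambda>(t, p). w t p) has_derivative blinfun_apply (D z)) (at z)"
    using assms unfolding C1_fun2_def by blast
  have "((\<lambda>s. (t, s)) has_derivative (\<lambda>h. (0, h))) (at p)"
    by (auto intro!: derivative_eq_intros)
  from has_derivative_compose[OF this D]
  have "(\<lambda>s. w t s) differentiable (at p)" unfolding differentiable_def by auto
  then show ?thesis by (simp add: DERIV_deriv_iff_real_differentiable)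
qed

lemma C1_norm_le_increment_snd:
  assumes "C1_fun2 w" "C1_norm_le w \<epsilon>"
  shows "\<exists>q. \<bar>q\<bar> \<le> \<epsilon> \<and> w t x - w t y = (x - y) * q"
proof -
  obtain z where "w t x - w t y = (x - y) * deriv (\<lambda>s. w t s) z"
    using MVT_between[OF C1_fun2_has_derivative_snd[OF assms(1)], of y x t] by blast
  moreover have "\<bar>deriv (\<lambda>s. w t s) z\<bar> \<le> \<epsilon>"
    using assms(2) unfolding C1_norm_le_def by blast
  ultimately show ?thesis by blast
qed

lemma abs_le_sup_norm2:
  assumes "\<forall>t p. \<bar>f t p\<bar> \<le> B"
  shows "\<bar>f t p\<bar> \<le> sup_norm2 f"
  unfolding sup_norm2_def
  by (rule cSUP_upper2[of _ _ "(t, p)"]) (use assms in \<open>auto intro!: bdd_aboveI2\<close>)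

lemma C1_norm_le_abs_diff_le_sup_norm2:
  assumes "C1_norm_le w1 \<epsilon>" "C1_norm_le w2 \<epsilon>"
  shows "\<bar>w1 t p - w2 t p\<bar> \<le> sup_norm2 (\<lambda>t p. w1 t p - w2 t p)"
proof (rule abs_le_sup_norm2[where B = "2 * \<epsilon>"], intro allI)
  fix s q
  have "\<bar>w1 s q\<bar> \<le> \<epsilon>" "\<bar>w2 s q\<bar> \<le> \<epsilon>" using assms unfolding C1_norm_le_def by blast+
  then show "\<bar>w1 s q - w2 s q\<bar> \<le> 2 * \<epsilon>" by linarith
qed

lemma sup_norm1_le:
  assumes "\<And>t. \<bar>f t\<bar> \<le> B"
  shows "sup_norm1 f \<le> B"
  unfolding sup_norm1_def using assms by (intro cSUP_least) auto

definition omega_dist ::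
  "(real \<Rightarrow> real \<Rightarrow> real \<Rightarrow> real \<Rightarrow> real) \<Rightarrow> (nat \<Rightarrow> real \<Rightarrow> real \<Rightarrow> real)
     \<Rightarrow> (nat \<Rightarrow> real \<Rightarrow> real \<Rightarrow> real) \<Rightarrow> real" where
  "omega_dist Xi w1 w2 = (\<Sum>i\<in>{1..3}. Xi_omega0 Xi i * sup_norm2 (\<lambda>t p. w1 i t p - w2 i t p))"

lemma omega_dist_nonneg:
  assumes "\<forall>i\<in>{1..3}. C1_norm_le (w1 i) \<epsilon> \<and> C1_norm_le (w2 i) \<epsilon>"
  shows "0 \<le> omega_dist Xi w1 w2"
  unfolding omega_dist_def
proof (intro sum_nonneg mult_nonneg_nonneg)
  fix i :: nat assume "i \<in> {1..3}"
  then show "0 \<le> sup_norm2 (\<lambda>t p. w1 i t p - w2 i t p)"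
    using assms C1_norm_le_abs_diff_le_sup_norm2[of "w1 i" \<epsilon> "w2 i" 0 0]
    by (meson abs_ge_zero order_trans)
qed (simp add: Xi_omega0_def)

text \<open>Splitting \<open>u - z = (u - v) + (v - z)\<close> with \<open>u - v\<close> proportional to \<open>x\<close>: the
  proportionality factors only perturb the coefficient of \<open>x\<close>.\<close>
lemma linear_form_regroup:
  fixes x c0 \<xi> \<eta> \<epsilon> :: real and u v z c q \<Omega> d :: "'i \<Rightarrow> real"
  assumes uv: "\<And>i. i \<in> I \<Longrightarrow> u i - v i = x * q i" and q: "\<And>i. i \<in> I \<Longrightarrow> \<bar>q i\<bar> \<le> \<epsilon>"
    and c: "\<And>i. i \<in> I \<Longrightarrow> \<bar>c i\<bar> \<le> \<Omega> i" and vz: "\<And>i. i \<in> I \<Longrightarrow> \<bar>v i - z i\<bar> \<le> d i"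
    and c0: "\<bar>c0 - \<xi>\<bar> \<le> \<eta>" and small: "\<epsilon> * (\<Sum>i\<in>I. \<Omega> i) \<le> \<eta>"
  shows "\<exists>A g. x * c0 + (\<Sum>i\<in>I. (u i - z i) * c i) = A * x + g
           \<and> \<bar>A - \<xi>\<bar> \<le> 2 * \<eta> \<and> \<bar>g\<bar> \<le> (\<Sum>i\<in>I. \<Omega> i * d i)"
proof (intro exI conjI)
  have "(\<Sum>i\<in>I. (u i - z i) * c i) = (\<Sum>i\<in>I. x * (q i * c i) + (v i - z i) * c i)"
  proof (rule sum.cong)
    fix i assume "i \<in> I"
    then have "u i - z i = x * q i + (v i - z i)" using uv by fastforce
    then show "(u i - z i) * c i = x * (q i * c i) + (v i - z i) * c i"
      by (simp only: distrib_right mult.assoc)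
  qed simp
  then have "x * c0 + (\<Sum>i\<in>I. (u i - z i) * c i)
      = x * c0 + x * (\<Sum>i\<in>I. q i * c i) + (\<Sum>i\<in>I. (v i - z i) * c i)"
    by (simp add: sum.distrib sum_distrib_left)
  then show "x * c0 + (\<Sum>i\<in>I. (u i - z i) * c i)
      = (c0 + (\<Sum>i\<in>I. q i * c i)) * x + (\<Sum>i\<in>I. (v i - z i) * c i)"
    by (simp add: algebra_simps)
  have "\<bar>\<Sum>i\<in>I. q i * c i\<bar> \<le> (\<Sum>i\<in>I. \<epsilon> * \<Omega> i)"
    using q c by (intro order_trans[OF sum_abs] sum_mono) (auto simp: abs_mult intro!: mult_mono')
  then show "\<bar>c0 + (\<Sum>i\<in>I. q i * c i) - \<xi>\<bar> \<le> 2 * \<eta>"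
    using c0 small unfolding sum_distrib_left by linarith
  show "\<bar>\<Sum>i\<in>I. (v i - z i) * c i\<bar> \<le> (\<Sum>i\<in>I. \<Omega> i * d i)"
    using vz c by (intro order_trans[OF sum_abs] sum_mono) (auto simp: abs_mult mult.commute intro!: mult_mono')
qed

lemma Xi_difference_linearized:
  assumes approx: "increment_approx Xi m \<eta>" and "\<epsilon> \<le> m" "\<eta> \<le> 1"
    and small: "\<epsilon> * (\<Sum>i\<in>{1..3}. Xi_omega0 Xi i) \<le> \<eta>"
    and p: "\<bar>p1\<bar> \<le> \<epsilon>" "\<bar>p2\<bar> \<le> \<epsilon>"
    and w: "\<forall>i\<in>{1..3}. C1_fun2 (w1 i) \<and> C1_norm_le (w1 i) \<epsilon> \<and> C1_norm_le (w2 i) \<epsilon>"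
  shows "\<exists>A g. Xi p1 (w1 1 t p1) (w1 2 t p1) (w1 3 t p1) - Xi p2 (w2 1 t p2) (w2 2 t p2) (w2 3 t p2)
                 = A * (p1 - p2) + g
             \<and> \<bar>A - deriv (\<lambda>p. Xi p 0 0 0) 0\<bar> \<le> 2 * \<eta> \<and> \<bar>g\<bar> \<le> omega_dist Xi w1 w2"
proof -
  have "\<forall>i\<in>{1..3}. \<bar>w1 i t p1\<bar> \<le> m \<and> \<bar>w2 i t p2\<bar> \<le> m"
    using w \<open>\<epsilon> \<le> m\<close> unfolding C1_norm_le_def by (meson order_trans)
  moreover have "\<bar>p1\<bar> \<le> m" "\<bar>p2\<bar> \<le> m" using p \<open>\<epsilon> \<le> m\<close> by linarith+
  ultimately obtain c where eq: "Xi p1 (w1 1 t p1) (w1 2 t p1) (w1 3 t p1) - Xi p2 (w2 1 t p2) (w2 2 t p2) (w2 3 t p2)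
      = (p1 - p2) * c 0 + (\<Sum>i\<in>{1..3}. (w1 i t p1 - w2 i t p2) * c i)"
    and c0: "\<bar>c 0 - deriv (\<lambda>p. Xi p 0 0 0) 0\<bar> < \<eta>"
    and c: "\<forall>i\<in>{1..3}. \<bar>c i - pderiv_omega0 Xi i\<bar> < \<eta>"
    using approx[unfolded increment_approx_def, rule_format,
        of p1 p2 "\<lambda>i. w1 i t p1" "\<lambda>i. w2 i t p2"] by blast
  have "\<forall>i\<in>{1..3}. \<exists>q. \<bar>q\<bar> \<le> \<epsilon> \<and> w1 i t p1 - w1 i t p2 = (p1 - p2) * q"
    using w C1_norm_le_increment_snd by blast
  then obtain q where q: "\<And>i. i \<in> {1..3} \<Longrightarrow> \<bar>q i\<bar> \<le> \<epsilon> \<and> w1 i t p1 - w1 i t p2 = (p1 - p2) * q i"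
    by metis
  have "\<exists>A g. (p1 - p2) * c 0 + (\<Sum>i\<in>{1..3}. (w1 i t p1 - w2 i t p2) * c i) = A * (p1 - p2) + g
      \<and> \<bar>A - deriv (\<lambda>p. Xi p 0 0 0) 0\<bar> \<le> 2 * \<eta>
      \<and> \<bar>g\<bar> \<le> (\<Sum>i\<in>{1..3}. Xi_omega0 Xi i * sup_norm2 (\<lambda>t p. w1 i t p - w2 i t p))"
  proof (rule linear_form_regroup[where v = "\<lambda>i. w1 i t p2"])
    show "\<bar>c i\<bar> \<le> Xi_omega0 Xi i" if "i \<in> {1..3}" for i
      using c that \<open>\<eta> \<le> 1\<close> unfolding Xi_omega0_def by fastforce
    show "\<bar>w1 i t p2 - w2 i t p2\<bar> \<le> sup_norm2 (\<lambda>t p. w1 i t p - w2 i t p)" if "i \<in> {1..3}" for i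
      using w that by (intro C1_norm_le_abs_diff_le_sup_norm2) auto
  qed (use q c0 small in auto)
  then show ?thesis unfolding eq omega_dist_def .
qed

lemma periodic_add_int_mult:
  assumes "\<forall>t. e (t + T) = e t"
  shows "e (t + of_int k * T) = e t"
proof (induction k rule: int_induct[where k = 0])
  case (step1 i)
  then show ?case using assms[rule_format, of "t + of_int i * T"] by (simp add: algebra_simps)
next
  case (step2 i)
  then show ?case using assms[rule_format, of "t + of_int (i - 1) * T"] by (simp add: algebra_simps)
qed simp

lemma continuous_periodic_attains_abs_max:
  fixes e :: "real \<Rightarrow> real"
  assumes "T > 0" "\<forall>t. e (t + T) = e t" "continuous_on UNIV e"
  obtains t0 where "\<And>t. \<bar>e t\<bar> \<le> \<bar>e t0\<bar>"
proof -
  have "continuous_on {0..T} (\<lambda>t. \<bar>e t\<bar>)"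
    using assms(3) by (intro continuous_intros) (auto intro: continuous_on_subset)
  then obtain t0 where t0: "\<forall>s\<in>{0..T}. \<bar>e s\<bar> \<le> \<bar>e t0\<bar>"
    using continuous_attains_sup[of "{0..T}" "\<lambda>t. \<bar>e t\<bar>"] assms(1) by auto
  have "\<bar>e t\<bar> \<le> \<bar>e t0\<bar>" for t
  proof -
    define k where "k = \<lfloor>t / T\<rfloor>"
    have "of_int k * T \<le> t" "t < (of_int k + 1) * T"
      using assms(1) floor_divide_lower[of T t] floor_divide_upper[of T t] by (auto simp: k_def)
    then have "t - of_int k * T \<in> {0..T}" by (auto simp: algebra_simps)
    moreover have "e t = e (t - of_int k * T)"
      using periodic_add_int_mult[OF assms(2), of "t - of_int k * T" k] by simp
    ultimately show ?thesis using t0 by simp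
  qed
  then show ?thesis using that by blast
qed

lemma DERIV_zero_at_abs_max:
  fixes e :: "real \<Rightarrow> real"
  assumes "(e has_real_derivative E) (at t0)" "\<And>t. \<bar>e t\<bar> \<le> \<bar>e t0\<bar>"
  shows "E = 0"
proof (cases "e t0 \<ge> 0")
  case True
  show ?thesis
    by (rule DERIV_local_max[OF assms(1), of 1]) (use assms(2) True in \<open>auto simp: abs_le_iff\<close>)
next
  case False
  show ?thesis
    by (rule DERIV_local_min[OF assms(1), of 1]) (use assms(2) False in \<open>auto simp: abs_le_iff\<close>)
qed

lemma periodic_abs_le_of_linear_derivative:
  fixes e e' :: "real \<Rightarrow> real"
  assumes "T > 0" "\<forall>t. e (t + T) = e t" and e': "\<And>t. (e has_real_derivative e' t) (at t)"
    and lin: "\<And>t. \<exists>A g. e' t = A * e t + g \<and> \<kappa> \<le> \<bar>A\<bar> \<and> \<bar>g\<bar> \<le> S" and "\<kappa> > 0"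
  shows "\<bar>e t\<bar> \<le> S / \<kappa>"
proof -
  have "continuous_on UNIV e"
    using e' by (meson DERIV_isCont continuous_at_imp_continuous_on)
  then obtain t0 where t0: "\<And>t. \<bar>e t\<bar> \<le> \<bar>e t0\<bar>"
    using continuous_periodic_attains_abs_max assms(1,2) by blast
  obtain A g where Ag: "e' t0 = A * e t0 + g" "\<kappa> \<le> \<bar>A\<bar>" "\<bar>g\<bar> \<le> S"
    using lin by blast
  have "e' t0 = 0" using DERIV_zero_at_abs_max[OF e' t0] .
  then have "g = - (A * e t0)" using Ag(1) by linarith
  then have "\<bar>g\<bar> = \<bar>A\<bar> * \<bar>e t0\<bar>" by (simp add: abs_mult)
  then have "\<kappa> * \<bar>e t0\<bar> \<le> \<bar>g\<bar>"
    using Ag(2) by (simp add: mult_right_mono)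
  then have "\<bar>e t0\<bar> \<le> S / \<kappa>"
    using Ag(3) \<open>\<kappa> > 0\<close> by (simp add: field_simps)
  then show ?thesis using t0 order_trans by blast
qed

lemma periodic_linear_perturbation_bounds:
  fixes e e' :: "real \<Rightarrow> real"
  assumes "T > 0" "\<forall>t. e (t + T) = e t" and "\<And>t. (e has_real_derivative e' t) (at t)"
    and lin: "\<And>t. \<exists>A g. e' t = A * e t + g \<and> \<bar>A + a\<bar> \<le> 2 * \<eta> \<and> \<bar>g\<bar> \<le> S"
    and "2 * \<eta> < a" and margin: "a + 2 * \<eta> \<le> K * (a - 2 * \<eta>)"
  shows "\<bar>e t\<bar> \<le> K * S / a" and "\<bar>e' t\<bar> \<le> K * S + S"
proof -
  have Ag: "\<exists>A g. e' t = A * e t + g \<and> a - 2 * \<eta> \<le> \<bar>A\<bar> \<and> \<bar>A\<bar> \<le> a + 2 * \<eta> \<and> \<bar>g\<bar> \<le> S" for t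
  proof -
    obtain A g where "e' t = A * e t + g" "\<bar>A + a\<bar> \<le> 2 * \<eta>" "\<bar>g\<bar> \<le> S"
      using lin by blast
    moreover have "a - 2 * \<eta> \<le> \<bar>A\<bar>" "\<bar>A\<bar> \<le> a + 2 * \<eta>"
      using \<open>\<bar>A + a\<bar> \<le> 2 * \<eta>\<close> \<open>2 * \<eta> < a\<close> by (auto simp: abs_if split: if_splits)
    ultimately show ?thesis by blast
  qed
  obtain A g where "a - 2 * \<eta> \<le> \<bar>A\<bar>" "\<bar>A\<bar> \<le> a + 2 * \<eta>" "\<bar>g\<bar> \<le> S"
    using Ag by blast
  then have "S \<ge> 0" "\<eta> \<ge> 0" using abs_ge_zero[of g] by linarith+
  have e_le: "\<bar>e s\<bar> \<le> S / (a - 2 * \<eta>)" for s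
    by (rule periodic_abs_le_of_linear_derivative[OF assms(1-3)])
      (use Ag in blast, use \<open>2 * \<eta> < a\<close> in simp)
  have "(a + 2 * \<eta>) * S \<le> K * (a - 2 * \<eta>) * S"
    using margin \<open>S \<ge> 0\<close> by (rule mult_right_mono)
  then have KS: "(a + 2 * \<eta>) * (S / (a - 2 * \<eta>)) \<le> K * S"
    using \<open>2 * \<eta> < a\<close> by (simp add: field_simps)
  have "a * (S / (a - 2 * \<eta>)) \<le> (a + 2 * \<eta>) * (S / (a - 2 * \<eta>))"
    using \<open>\<eta> \<ge> 0\<close> \<open>S \<ge> 0\<close> \<open>2 * \<eta> < a\<close> by (intro mult_right_mono) auto
  with KS have "a * (S / (a - 2 * \<eta>)) \<le> K * S" by linarith
  then have "S / (a - 2 * \<eta>) \<le> K * S / a"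
    using \<open>\<eta> \<ge> 0\<close> \<open>2 * \<eta> < a\<close> by (simp add: pos_le_divide_eq mult.commute)
  then show "\<bar>e t\<bar> \<le> K * S / a"
    using e_le[of t] by linarith
  obtain A g where Ag: "e' t = A * e t + g" "\<bar>A + a\<bar> \<le> 2 * \<eta>" "\<bar>g\<bar> \<le> S"
    using lin by blast
  have "\<bar>e' t\<bar> \<le> \<bar>A\<bar> * \<bar>e t\<bar> + \<bar>g\<bar>"
    using Ag(1) by (simp add: abs_mult[symmetric] abs_triangle_ineq)
  also have "\<dots> \<le> (a + 2 * \<eta>) * (S / (a - 2 * \<eta>)) + S"
    using Ag(2,3) e_le[of t] \<open>2 * \<eta> < a\<close> by (intro add_mono mult_mono) auto
  finally show "\<bar>e' t\<bar> \<le> K * S + S" using KS by linarith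
qed

lemma exists_exp_margin:
  assumes "a > 0" "T > 0"
  obtains \<eta> :: real where "0 < \<eta>" "\<eta> \<le> 1" "2 * \<eta> < a" "a + 2 * \<eta> \<le> exp (a * T) * (a - 2 * \<eta>)"
proof
  define \<eta> where "\<eta> = min 1 (a\<^sup>2 * T / (4 + 2 * a * T))"
  have aT: "a * T > 0" using assms by simp
  show "0 < \<eta>" "\<eta> \<le> 1" using assms aT by (simp_all add: \<eta>_def add_pos_pos)
  have "\<eta> \<le> a\<^sup>2 * T / (4 + 2 * a * T)" by (simp add: \<eta>_def)
  then have small: "\<eta> * (4 + 2 * a * T) \<le> a\<^sup>2 * T"
    using aT by (simp add: pos_le_divide_eq)
  have "2 * \<eta> * (4 + 2 * a * T) < a * (4 + 2 * a * T)"
    using small assms by (simp add: power2_eq_square algebra_simps)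
  then show "2 * \<eta> < a" using aT by (simp add: mult_less_cancel_right)
  have "a + 2 * \<eta> \<le> (1 + a * T) * (a - 2 * \<eta>)"
    using small by (simp add: power2_eq_square algebra_simps)
  also have "\<dots> \<le> exp (a * T) * (a - 2 * \<eta>)"
    using \<open>2 * \<eta> < a\<close> by (intro mult_right_mono exp_ge_add_one_self) auto
  finally show "a + 2 * \<eta> \<le> exp (a * T) * (a - 2 * \<eta>)" .
qed

lemma periodic_solutions_difference_bounds:
  assumes approx: "increment_approx Xi m \<eta>" and "\<epsilon> \<le> m" "\<eta> \<le> 1"
    and small: "\<epsilon> * (\<Sum>i\<in>{1..3}. Xi_omega0 Xi i) \<le> \<eta>"
    and a: "deriv (\<lambda>p. Xi p 0 0 0) 0 = - a" "2 * \<eta> < a"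
    and margin: "a + 2 * \<eta> \<le> K * (a - 2 * \<eta>)" and "T > 0"
    and w: "\<forall>i\<in>{1..3}. C1_fun2 (w1 i) \<and> C1_norm_le (w1 i) \<epsilon> \<and> C1_norm_le (w2 i) \<epsilon>"
    and sol: "periodic_solution T Xi w1 \<psi>1" "periodic_solution T Xi w2 \<psi>2"
    and bounded: "\<forall>t. \<bar>\<psi>1 t\<bar> \<le> \<epsilon>" "\<forall>t. \<bar>\<psi>2 t\<bar> \<le> \<epsilon>"
  shows "sup_norm1 (\<lambda>t. \<psi>1 t - \<psi>2 t) \<le> K * omega_dist Xi w1 w2 / a"
    and "sup_norm1 (\<lambda>t. deriv \<psi>1 t - deriv \<psi>2 t) \<le> K * omega_dist Xi w1 w2 + omega_dist Xi w1 w2"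
proof -
  have \<psi>1': "(\<psi>1 has_real_derivative Xi (\<psi>1 t) (w1 1 t (\<psi>1 t)) (w1 2 t (\<psi>1 t)) (w1 3 t (\<psi>1 t))) (at t)"
    and \<psi>2': "(\<psi>2 has_real_derivative Xi (\<psi>2 t) (w2 1 t (\<psi>2 t)) (w2 2 t (\<psi>2 t)) (w2 3 t (\<psi>2 t))) (at t)" for t
    using sol unfolding periodic_solution_def by blast+
  have e': "((\<lambda>t. \<psi>1 t - \<psi>2 t) has_real_derivative deriv \<psi>1 t - deriv \<psi>2 t) (at t)" for t
    using DERIV_diff[OF \<psi>1' \<psi>2'] DERIV_imp_deriv[OF \<psi>1'] DERIV_imp_deriv[OF \<psi>2'] by simp
  have "\<exists>A g. deriv \<psi>1 t - deriv \<psi>2 t = A * (\<psi>1 t - \<psi>2 t) + g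
      \<and> \<bar>A + a\<bar> \<le> 2 * \<eta> \<and> \<bar>g\<bar> \<le> omega_dist Xi w1 w2" for t
    using Xi_difference_linearized[OF approx assms(2-4) bounded(1)[rule_format, of t]
        bounded(2)[rule_format, of t] w, of t]
    unfolding DERIV_imp_deriv[OF \<psi>1'] DERIV_imp_deriv[OF \<psi>2'] a(1) by simp
  note bounds = periodic_linear_perturbation_bounds[OF \<open>T > 0\<close> _ e' this a(2) margin]
  have "\<forall>t. \<psi>1 (t + T) - \<psi>2 (t + T) = \<psi>1 t - \<psi>2 t"
    using sol unfolding periodic_solution_def by simp
  from bounds[OF this]
  show "sup_norm1 (\<lambda>t. \<psi>1 t - \<psi>2 t) \<le> K * omega_dist Xi w1 w2 / a"
    and "sup_norm1 (\<lambda>t. deriv \<psi>1 t - deriv \<psi>2 t) \<le> K * omega_dist Xi w1 w2 + omega_dist Xi w1 w2"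
    by (simp_all add: sup_norm1_le)
qed

lemma periodic_solutions_difference_estimate:
  assumes "smooth4 Xi" "deriv (\<lambda>p. Xi p 0 0 0) 0 < 0" "T > 0"
  obtains \<epsilon> where "\<epsilon> > 0"
    and "\<And>w1 w2 \<psi>1 \<psi>2. \<forall>i\<in>{1..3}. C1_fun2 (w1 i) \<and> C1_norm_le (w1 i) \<epsilon> \<and> C1_norm_le (w2 i) \<epsilon> \<Longrightarrow>
      periodic_solution T Xi w1 \<psi>1 \<Longrightarrow> periodic_solution T Xi w2 \<psi>2 \<Longrightarrow>
      \<forall>t. \<bar>\<psi>1 t\<bar> \<le> \<epsilon> \<Longrightarrow> \<forall>t. \<bar>\<psi>2 t\<bar> \<le> \<epsilon> \<Longrightarrow>
      sup_norm1 (\<lambda>t. \<psi>1 t - \<psi>2 t) \<le> exp (Xi_psi0 Xi * T) * omega_dist Xi w1 w2 / Xi_psi0 Xi \<and>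
      sup_norm1 (\<lambda>t. deriv \<psi>1 t - deriv \<psi>2 t)
        \<le> exp (Xi_psi0 Xi * T) * omega_dist Xi w1 w2 + omega_dist Xi w1 w2"
proof -
  define a where "a = Xi_psi0 Xi"
  have "a > 0" and a: "deriv (\<lambda>p. Xi p 0 0 0) 0 = - a"
    using assms(2) by (simp_all add: a_def Xi_psi0_def)
  obtain \<eta> where "0 < \<eta>" "\<eta> \<le> 1" "2 * \<eta> < a"
    and margin: "a + 2 * \<eta> \<le> exp (a * T) * (a - 2 * \<eta>)"
    using exists_exp_margin[OF \<open>a > 0\<close> assms(3)] .
  obtain m where "m > 0" and approx: "increment_approx Xi m \<eta>"
    using smooth4_increment_approx[OF assms(1) \<open>0 < \<eta>\<close>] .
  define \<Omega> where "\<Omega> = (\<Sum>i\<in>{1..3}. Xi_omega0 Xi i)"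
  have "\<Omega> > 0" unfolding \<Omega>_def Xi_omega0_def by (intro sum_pos) auto
  define \<epsilon> where "\<epsilon> = min m (\<eta> / \<Omega>)"
  have "\<epsilon> > 0" "\<epsilon> \<le> m" using \<open>m > 0\<close> \<open>0 < \<eta>\<close> \<open>\<Omega> > 0\<close> by (simp_all add: \<epsilon>_def)
  have small: "\<epsilon> * \<Omega> \<le> \<eta>"
    using \<open>\<Omega> > 0\<close> by (simp add: \<epsilon>_def min_le_iff_disj flip: pos_le_divide_eq)
  show ?thesis
    using periodic_solutions_difference_bounds[OF approx \<open>\<epsilon> \<le> m\<close> \<open>\<eta> \<le> 1\<close>
        small[unfolded \<Omega>_def] a \<open>2 * \<eta> < a\<close> margin assms(3)]
    by (intro that[OF \<open>\<epsilon> > 0\<close>]) (simp add: a_def)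
qed

lemma le_one_plus_mult_trans:
  fixes x y c :: real
  assumes "x \<le> y" "0 \<le> y" "0 \<le> c"
  shows "x \<le> (1 + c) * y"
  using assms by (simp add: distrib_right add_increasing2)

theorem theoremA2:
  fixes Xi :: "real \<Rightarrow> real \<Rightarrow> real \<Rightarrow> real \<Rightarrow> real" and T :: real
  assumes "smooth4 Xi"
    and "Xi 0 0 0 0 = 0"
    and "deriv (\<lambda>p. Xi p 0 0 0) 0 < 0"
    and "T > 0"
  shows "\<exists>C \<epsilon>2 \<delta>. C > 0 \<and> \<epsilon>2 > 0 \<and> \<delta> > 0 \<and>
    (\<forall>(w1 :: nat \<Rightarrow> real \<Rightarrow> real \<Rightarrow> real) (w2 :: nat \<Rightarrow> real \<Rightarrow> real \<Rightarrow> real)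
       (\<psi>1 :: real \<Rightarrow> real) (\<psi>2 :: real \<Rightarrow> real).
       (\<forall>i\<in>{1..3}. C1_fun2 (w1 i) \<and> C1_fun2 (w2 i) \<and>
           periodic_t T (w1 i) \<and> periodic_t T (w2 i) \<and>
           C1_norm_le (w1 i) \<epsilon>2 \<and> C1_norm_le (w2 i) \<epsilon>2) \<and>
       periodic_solution T Xi w1 \<psi>1 \<and> periodic_solution T Xi w2 \<psi>2 \<and>
       (\<forall>t. \<bar>\<psi>1 t\<bar> \<le> \<delta>) \<and> (\<forall>t. \<bar>\<psi>2 t\<bar> \<le> \<delta>)
     \<longrightarrow>
       sup_norm1 (\<lambda>t. \<psi>1 t - \<psi>2 t) \<le>
         (1 + C * T * \<epsilon>2) * exp (Xi_psi0 Xi * T) * (1 / Xi_psi0 Xi) *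
         (\<Sum>i\<in>{1..3}. Xi_omega0 Xi i * sup_norm2 (\<lambda>t p. w1 i t p - w2 i t p))
     \<and> sup_norm1 (\<lambda>t. deriv \<psi>1 t - deriv \<psi>2 t) \<le>
         (1 + C * T * \<epsilon>2) * exp (Xi_psi0 Xi * T) *
         (\<Sum>i\<in>{1..3}. Xi_omega0 Xi i * sup_norm2 (\<lambda>t p. w1 i t p - w2 i t p))
         + (1 + C * \<epsilon>2) *
         (\<Sum>i\<in>{1..3}. Xi_omega0 Xi i * sup_norm2 (\<lambda>t p. w1 i t p - w2 i t p)))"
proof -
  obtain \<epsilon> where "\<epsilon> > 0" and estimate: "\<And>w1 w2 \<psi>1 \<psi>2.
      \<forall>i\<in>{1..3}. C1_fun2 (w1 i) \<and> C1_norm_le (w1 i) \<epsilon> \<and> C1_norm_le (w2 i) \<epsilon> \<Longrightarrow>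
      periodic_solution T Xi w1 \<psi>1 \<Longrightarrow> periodic_solution T Xi w2 \<psi>2 \<Longrightarrow>
      \<forall>t. \<bar>\<psi>1 t\<bar> \<le> \<epsilon> \<Longrightarrow> \<forall>t. \<bar>\<psi>2 t\<bar> \<le> \<epsilon> \<Longrightarrow>
      sup_norm1 (\<lambda>t. \<psi>1 t - \<psi>2 t) \<le> exp (Xi_psi0 Xi * T) * omega_dist Xi w1 w2 / Xi_psi0 Xi \<and>
      sup_norm1 (\<lambda>t. deriv \<psi>1 t - deriv \<psi>2 t)
        \<le> exp (Xi_psi0 Xi * T) * omega_dist Xi w1 w2 + omega_dist Xi w1 w2"
    using periodic_solutions_difference_estimate[OF assms(1,3,4)] by blast
  have relaxed: "sup_norm1 (\<lambda>t. \<psi>1 t - \<psi>2 t) \<le> (1 + 1 * T * \<epsilon>) * exp (Xi_psi0 Xi * T) * (1 / Xi_psi0 Xi) * omega_dist Xi w1 w2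
      \<and> sup_norm1 (\<lambda>t. deriv \<psi>1 t - deriv \<psi>2 t)
        \<le> (1 + 1 * T * \<epsilon>) * exp (Xi_psi0 Xi * T) * omega_dist Xi w1 w2 + (1 + 1 * \<epsilon>) * omega_dist Xi w1 w2"
    if w: "\<forall>i\<in>{1..3}. C1_fun2 (w1 i) \<and> C1_norm_le (w1 i) \<epsilon> \<and> C1_norm_le (w2 i) \<epsilon>"
      and "periodic_solution T Xi w1 \<psi>1" "periodic_solution T Xi w2 \<psi>2"
      and "\<forall>t. \<bar>\<psi>1 t\<bar> \<le> \<epsilon>" "\<forall>t. \<bar>\<psi>2 t\<bar> \<le> \<epsilon>"
    for w1 w2 \<psi>1 \<psi>2
  proof -
    let ?a = "Xi_psi0 Xi" and ?K = "exp (Xi_psi0 Xi * T)" and ?S = "omega_dist Xi w1 w2"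
    have "0 \<le> ?S" using w by (intro omega_dist_nonneg) blast
    have "0 \<le> T * \<epsilon>" "0 \<le> \<epsilon>" "0 < ?a"
      using assms(3,4) \<open>\<epsilon> > 0\<close> by (simp_all add: Xi_psi0_def)
    note sharp = estimate[OF that]
    have bound1: "sup_norm1 (\<lambda>t. \<psi>1 t - \<psi>2 t) \<le> (1 + 1 * T * \<epsilon>) * (?K * ?S / ?a)"
      using sharp \<open>0 \<le> ?S\<close> \<open>0 \<le> T * \<epsilon>\<close> \<open>0 < ?a\<close> by (intro le_one_plus_mult_trans) auto
    have "sup_norm1 (\<lambda>t. deriv \<psi>1 t - deriv \<psi>2 t) \<le> ?K * ?S + ?S"
      using sharp by blast
    also have "\<dots> \<le> (1 + 1 * T * \<epsilon>) * (?K * ?S) + (1 + 1 * \<epsilon>) * ?S"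
      using \<open>0 \<le> ?S\<close> \<open>0 \<le> T * \<epsilon>\<close> \<open>0 \<le> \<epsilon>\<close> by (intro add_mono le_one_plus_mult_trans) auto
    finally show ?thesis using bound1 by (simp add: mult.assoc)
  qed
  show ?thesis
    unfolding omega_dist_def[symmetric]
    by (rule exI[of _ 1], rule exI[of _ \<epsilon>], rule exI[of _ \<epsilon>],
        intro conjI allI impI zero_less_one \<open>\<epsilon> > 0\<close>) (use relaxed in blast)+
qed

end
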